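(* Let $T$ be a hypertree and let $e_1,e_2$ be edges of $T$. Suppose $u_i,v_i\in e_i$ for $i=1,2$, and $d_T(u_1,u_2)=d_T(v_1,v_2)+2$. For $i=1,2$, let $T_i$ be the component of $T-e_i$ containing $u_i$, and let $A_i=\{w\in V(T): d_T(w,u_i)=d_T(w,v_i)\}$. Let $x=x(T)$. Then: (i) $\rho(T)(x_{u_1}-x_{u_2})-\rho(T)(x_{v_1}-x_{v_2})=2(\sigma_T(T_2)-\sigma_T(T_1))+\sigma_T(A_2)-\sigma_T(A_1)$. (ii) If moreover $e_i\setminus\{u_i,v_i\}=\{w_i\}$ and $\deg_T(w_i)=1$ for $i=1,2$, then $(\rho(T)+1)(x_{w_1}-x_{w_2})-\rho(T)(x_{v_1}-x_{v_2})=x_{w_2}-x_{w_1}+\sigma_T(T_2)-\sigma_T(T_1)$ and $\rho(T)(x_{u_1}-x_{u_2})-(\rho(T)+1)(x_{w_1}-x_{w_2})=\sigma_T(T_2)-\sigma_T(T_1)$.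
   Context: A (simple) hypergraph has edges that are subsets of the vertex set of size at least two. A loose path from $v_0$ to $v_p$ of length $p$ is an alternating sequence $(v_0,e_1,v_1,\dots,e_p,v_p)$ of distinct vertices and distinct edges with $v_{i-1},v_i\in e_i$ and $e_i\cap e_j=\emptyset$ whenever $j>i+1$; loose cycles are defined analogously (closed, with non-consecutive edges disjoint). A hypertree is a connected hypergraph (any two vertices joined by a loose path) with no loose cycle. $d_T(u,v)$ is the length of a shortest loose path from $u$ to $v$; $D(T)=(d_T(u,v))$ is the distance matrix, $\rho(T)$ its largest eigenvalue, and $x(T)$ the unique unit positive eigenvector of $D(T)$ for $\rho(T)$ (distance Perron vector). The degree $\deg_T(w)$ is the number of edges containing $w$. $T-e$ is the hypergraph on $V(T)$ with edge set $E(T)\setminus\{e\}$. For $V_1\subseteq V(T)$, $\sigma_T(V_1)=\sum_{v\in V_1}x_v$ with $x=x(T)$; for a subhypergraph $H$, $\sigma_T(H)=\sigma_T(V(H))$. *)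

theory Defs
  imports Main "HOL-Analysis.Analysis"
begin

definition hypergraph :: "'a set \<Rightarrow> 'a set set \<Rightarrow> bool" where
  "hypergraph V E \<longleftrightarrow> finite V \<and> (\<forall>e\<in>E. e \<subseteq> V \<and> card e \<ge> 2)"

text \<open>Loose path (v_0,e_1,v_1,...,e_p,v_p): vertex list vs of length p+1,
  edge list es of length p; es ! i plays the role of e_(i+1).\<close>
definition loose_path :: "'a set \<Rightarrow> 'a set set \<Rightarrow> 'a list \<Rightarrow> 'a set list \<Rightarrow> bool" where
  "loose_path V E vs es \<longleftrightarrow>
     length vs = Suc (length es) \<and> set vs \<subseteq> V \<and> set es \<subseteq> E \<and>
     distinct vs \<and> distinct es \<and>
     (\<forall>i < length es. vs ! i \<in> es ! i \<and> vs ! Suc i \<in> es ! i) \<and>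
     (\<forall>i < length es. \<forall>j < length es. i + 1 < j \<longrightarrow> es ! i \<inter> es ! j = {})"

definition loose_path_from :: "'a set \<Rightarrow> 'a set set \<Rightarrow> 'a \<Rightarrow> 'a \<Rightarrow> nat \<Rightarrow> bool" where
  "loose_path_from V E u v p \<longleftrightarrow>
     (\<exists>vs es. loose_path V E vs es \<and> hd vs = u \<and> last vs = v \<and> length es = p)"

definition loose_cycle :: "'a set \<Rightarrow> 'a set set \<Rightarrow> 'a list \<Rightarrow> 'a set list \<Rightarrow> bool" where
  "loose_cycle V E vs es \<longleftrightarrow>
     length es \<ge> 2 \<and> length vs = length es \<and> set vs \<subseteq> V \<and> set es \<subseteq> E \<and>
     distinct vs \<and> distinct es \<and>
     (\<forall>i < length es. vs ! i \<in> es ! i \<and> vs ! (Suc i mod length es) \<in> es ! i) \<and>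
     (\<forall>i < length es. \<forall>j < length es.
        i \<noteq> j \<and> Suc i mod length es \<noteq> j \<and> Suc j mod length es \<noteq> i
        \<longrightarrow> es ! i \<inter> es ! j = {})"

definition hconnected :: "'a set \<Rightarrow> 'a set set \<Rightarrow> bool" where
  "hconnected V E \<longleftrightarrow> (\<forall>u\<in>V. \<forall>v\<in>V. \<exists>p. loose_path_from V E u v p)"

definition hypertree :: "'a set \<Rightarrow> 'a set set \<Rightarrow> bool" where
  "hypertree V E \<longleftrightarrow> hypergraph V E \<and> hconnected V E \<and>
     \<not> (\<exists>vs es. loose_cycle V E vs es)"

definition hdist :: "'a set \<Rightarrow> 'a set set \<Rightarrow> 'a \<Rightarrow> 'a \<Rightarrow> nat" where
  "hdist V E u v = (LEAST p. loose_path_from V E u v p)"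

definition dist_eigenpair :: "'a set \<Rightarrow> 'a set set \<Rightarrow> real \<Rightarrow> ('a \<Rightarrow> real) \<Rightarrow> bool" where
  "dist_eigenpair V E lam x \<longleftrightarrow>
     (\<forall>u\<in>V. (\<Sum>v\<in>V. real (hdist V E u v) * x v) = lam * x u)"

definition dist_spectral_radius :: "'a set \<Rightarrow> 'a set set \<Rightarrow> real" where
  "dist_spectral_radius V E =
     Max {lam. \<exists>x. (\<exists>v\<in>V. x v \<noteq> 0) \<and> dist_eigenpair V E lam x}"

definition dist_perron_vector :: "'a set \<Rightarrow> 'a set set \<Rightarrow> ('a \<Rightarrow> real) \<Rightarrow> bool" where
  "dist_perron_vector V E x \<longleftrightarrow>
     (\<forall>v\<in>V. x v > 0) \<and> (\<Sum>v\<in>V. (x v)\<^sup>2) = 1 \<and>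
     dist_eigenpair V E (dist_spectral_radius V E) x"

definition hdeg :: "'a set set \<Rightarrow> 'a \<Rightarrow> nat" where
  "hdeg E w = card {e\<in>E. w \<in> e}"

definition comp_minus_edge :: "'a set \<Rightarrow> 'a set set \<Rightarrow> 'a set \<Rightarrow> 'a \<Rightarrow> 'a set" where
  "comp_minus_edge V E e u = {w\<in>V. \<exists>p. loose_path_from V (E - {e}) u w p}"

definition sigma :: "('a \<Rightarrow> real) \<Rightarrow> 'a set \<Rightarrow> real" where
  "sigma x S = (\<Sum>v\<in>S. x v)"

end

theory Submission
  imports Defs
begin

text \<open>
  Let \<open>e\<close> be an edge of the hypertree and \<open>a \<noteq> b\<close> two of its vertices.
  A walk from \<open>a\<close> to \<open>b\<close> avoiding \<open>e\<close> would close up with \<open>e\<close> to a loose cycle,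
  so \<open>T - e\<close> separates them.  Hence \<open>d(b,w) = d(a,w) + 1\<close> on the component
  \<open>C\<^sub>a\<close> of \<open>a\<close>, symmetrically on \<open>C\<^sub>b\<close>, and \<open>d(a,w) = d(b,w)\<close> everywhere else.
  Subtracting the eigen-equations at \<open>a\<close> and \<open>b\<close> gives
  \<open>\<rho> (x\<^sub>a - x\<^sub>b) = \<sigma>(C\<^sub>b) - \<sigma>(C\<^sub>a)\<close>, and
  \<open>\<sigma>(V) = \<sigma>(C\<^sub>a) + \<sigma>(C\<^sub>b) + \<sigma>(A)\<close> for the equidistant set \<open>A\<close>;
  taking the difference of these identities for the two edges yields (i).
  A pendant vertex \<open>w\<close> of \<open>e\<close> is its own component and the only vertex
  equidistant from the other two vertices of \<open>e\<close>, which yields (ii).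
  Distances are handled through walks: a shortest walk is a loose path.
\<close>

section \<open>Walks in hypergraphs\<close>

definition hadj :: "'a set set \<Rightarrow> 'a \<Rightarrow> 'a \<Rightarrow> bool" where
  "hadj F a b \<longleftrightarrow> (\<exists>f\<in>F. a \<in> f \<and> b \<in> f)"

definition hwalk :: "'a set set \<Rightarrow> nat \<Rightarrow> (nat \<Rightarrow> 'a) \<Rightarrow> (nat \<Rightarrow> 'a set) \<Rightarrow> bool" where
  "hwalk F n g h \<longleftrightarrow> (\<forall>i<n. h i \<in> F \<and> g i \<in> h i \<and> g (Suc i) \<in> h i)"

definition geodesic :: "'a set set \<Rightarrow> nat \<Rightarrow> (nat \<Rightarrow> 'a) \<Rightarrow> bool" where
  "geodesic F n g \<longleftrightarrow>
     (\<forall>i j m. i \<le> j \<longrightarrow> j \<le> n \<longrightarrow> (hadj F ^^ m) (g i) (g j) \<longrightarrow> j - i \<le> m)"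

lemma hadj_pow_sym:
  assumes "(hadj F ^^ n) a b"
  shows "(hadj F ^^ n) b a"
  using assms
proof (induction n arbitrary: b)
  case (Suc n)
  obtain y where "(hadj F ^^ n) a y" "hadj F y b"
    using Suc.prems by (rule relpowp_Suc_E)
  have "hadj F b y"
    using \<open>hadj F y b\<close> unfolding hadj_def by blast
  moreover have "(hadj F ^^ n) y a"
    using Suc.IH \<open>(hadj F ^^ n) a y\<close> .
  ultimately show ?case
    by (rule relpowp_Suc_I2)
qed simp

lemma hadj_pow_mono:
  assumes "F \<subseteq> G" and "(hadj F ^^ n) a b"
  shows "(hadj G ^^ n) a b"
  using relpowp_mono[of "hadj F" "hadj G", OF _ assms(2)] assms(1) unfolding hadj_def by blast

lemma hadj_pow_iff_hwalk:
  "(hadj F ^^ n) u w \<longleftrightarrow> (\<exists>g h. hwalk F n g h \<and> g 0 = u \<and> g n = w)"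
proof
  assume "(hadj F ^^ n) u w"
  then obtain g where g: "g 0 = u" "g n = w" "\<forall>i<n. hadj F (g i) (g (Suc i))"
    unfolding relpowp_fun_conv by blast
  then have "\<forall>i. \<exists>f. i < n \<longrightarrow> f \<in> F \<and> g i \<in> f \<and> g (Suc i) \<in> f"
    unfolding hadj_def by blast
  then obtain h where "\<forall>i<n. h i \<in> F \<and> g i \<in> h i \<and> g (Suc i) \<in> h i"
    by metis
  then show "\<exists>g h. hwalk F n g h \<and> g 0 = u \<and> g n = w"
    using g unfolding hwalk_def by blast
next
  assume "\<exists>g h. hwalk F n g h \<and> g 0 = u \<and> g n = w"
  then show "(hadj F ^^ n) u w"
    unfolding relpowp_fun_conv hwalk_def hadj_def by blast
qed

lemma hwalk_segment:
  assumes "hwalk F n g h" "i \<le> j" "j \<le> n"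
  shows "(hadj F ^^ (j - i)) (g i) (g j)"
  unfolding relpowp_fun_conv
proof (intro exI conjI allI impI)
  show "g (i + 0) = g i" "g (i + (j - i)) = g j" using assms by simp_all
  fix k assume "k < j - i"
  then have "i + k < n"
    using assms by linarith
  then show "hadj F (g (i + k)) (g (i + Suc k))"
    using assms(1) unfolding hwalk_def hadj_def by auto
qed

lemma shortest_hwalk_geodesic:
  assumes walk: "hwalk F n g h"
    and shortest: "\<And>m. m < n \<Longrightarrow> \<not> (hadj F ^^ m) (g 0) (g n)"
  shows "geodesic F n g"
  unfolding geodesic_def
proof (intro allI impI)
  fix i j m assume ij: "i \<le> j" "j \<le> n" and short: "(hadj F ^^ m) (g i) (g j)"
  have "(hadj F ^^ (i - 0)) (g 0) (g i)"
    by (rule hwalk_segment[OF walk]) (use ij in auto)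
  then have "(hadj F ^^ (i - 0 + m)) (g 0) (g j)"
    using short by (rule relpowp_trans)
  moreover have "(hadj F ^^ (n - j)) (g j) (g n)"
    by (rule hwalk_segment[OF walk]) (use ij in auto)
  ultimately have "(hadj F ^^ (i - 0 + m + (n - j))) (g 0) (g n)"
    by (rule relpowp_trans)
  then show "j - i \<le> m"
    using shortest[of "i + m + (n - j)"] ij by fastforce
qed

lemma geodesic_hwalk_loose:
  assumes walk: "hwalk F n g h" and geo: "geodesic F n g"
  shows "inj_on g {..n}" and "inj_on h {..<n}"
    and "\<And>i j. i + 1 < j \<Longrightarrow> j < n \<Longrightarrow> h i \<inter> h j = {}"
proof -
  have step: "h i \<in> F" "g i \<in> h i" "g (Suc i) \<in> h i" if "i < n" for i
    using walk that unfolding hwalk_def by auto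
  have far: "j - i \<le> m" if "i \<le> j" "j \<le> n" "(hadj F ^^ m) (g i) (g j)" for i j m
    using geo that unfolding geodesic_def by blast
  have vertex_eq: "a = b" if "a \<le> b" "b \<le> n" "g a = g b" for a b
  proof -
    have "(hadj F ^^ 0) (g a) (g b)"
      using that(3) by simp
    then have "b - a \<le> 0"
      by (rule far[rotated 2]) (use that in linarith)+
    then show "a = b"
      using that(1) by linarith
  qed
  show "inj_on g {..n}"
  proof (rule inj_onI)
    fix a b assume "a \<in> {..n}" "b \<in> {..n}" "g a = g b"
    then show "a = b"
      using vertex_eq[of a b] vertex_eq[of b a] by (cases "a \<le> b") auto
  qed
  have edge_eq: "a = b" if "a \<le> b" "b < n" "h a = h b" for a b
  proof -
    have "hadj F (g a) (g (Suc b))"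
      using step[of a] step[of b] that unfolding hadj_def by auto
    then have "(hadj F ^^ 1) (g a) (g (Suc b))"
      by (simp only: relpowp_1)
    then have "Suc b - a \<le> 1"
      by (rule far[rotated 2]) (use that in linarith)+
    then show "a = b"
      using that(1) by linarith
  qed
  show "inj_on h {..<n}"
  proof (rule inj_onI)
    fix a b assume "a \<in> {..<n}" "b \<in> {..<n}" "h a = h b"
    then show "a = b"
      using edge_eq[of a b] edge_eq[of b a] by (cases "a \<le> b") auto
  qed
  show "h i \<inter> h j = {}" if "i + 1 < j" "j < n" for i j
  proof (rule ccontr)
    assume "h i \<inter> h j \<noteq> {}"
    then obtain y where "y \<in> h i" "y \<in> h j" by blast
    then have "hadj F (g i) y" "hadj F y (g (Suc j))"
      using step[of i] step[of j] that unfolding hadj_def by auto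
    then have "(hadj F ^^ Suc 1) (g i) (g (Suc j))"
      by (intro relpowp_Suc_I[where n=1]) (simp_all only: relpowp_1)
    then have "Suc j - i \<le> Suc 1"
      by (rule far[rotated 2]) (use that in linarith)+
    then show False
      using that(1) by linarith
  qed
qed

lemma loose_path_of_geodesic:
  assumes hg: "hypergraph V E" and FE: "F \<subseteq> E" and start: "g 0 \<in> V"
    and walk: "hwalk F n g h" and geo: "geodesic F n g"
  shows "loose_path V F (map g [0..<Suc n]) (map h [0..<n])"
proof -
  have gV: "g k \<in> V" if "k \<le> n" for k
  proof (cases k)
    case (Suc i)
    then have "h i \<in> E" "g k \<in> h i"
      using walk FE that unfolding hwalk_def by auto
    then show ?thesis
      using hg unfolding hypergraph_def by blast
  qed (use start in simp)
  note loose = geodesic_hwalk_loose[OF walk geo]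
  show ?thesis
    unfolding loose_path_def
  proof (intro conjI)
    show "set (map g [0..<Suc n]) \<subseteq> V"
      using gV by (auto simp del: upt_Suc)
    show "set (map h [0..<n]) \<subseteq> F"
      using walk unfolding hwalk_def by auto
    show "distinct (map g [0..<Suc n])"
      using loose(1) by (simp del: upt_Suc add: distinct_map atLeast0LessThan lessThan_Suc_atMost)
    show "distinct (map h [0..<n])"
      using loose(2) by (simp add: distinct_map atLeast0LessThan)
    show "\<forall>i<length (map h [0..<n]). map g [0..<Suc n] ! i \<in> map h [0..<n] ! i
        \<and> map g [0..<Suc n] ! Suc i \<in> map h [0..<n] ! i"
      using walk unfolding hwalk_def by (auto simp del: upt_Suc simp: nth_map_upt)
    show "\<forall>i<length (map h [0..<n]). \<forall>j<length (map h [0..<n]).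
        i + 1 < j \<longrightarrow> map h [0..<n] ! i \<inter> map h [0..<n] ! j = {}"
      using loose(3) by auto
  qed simp
qed

lemma hadj_pow_imp_loose_path_from:
  assumes hg: "hypergraph V E" and FE: "F \<subseteq> E" and u: "u \<in> V"
    and reach: "(hadj F ^^ n) u w"
  shows "\<exists>p\<le>n. loose_path_from V F u w p"
proof -
  define p where "p = (LEAST p. (hadj F ^^ p) u w)"
  have "(hadj F ^^ p) u w" "p \<le> n"
    unfolding p_def using reach by (auto intro: LeastI Least_le)
  then obtain g h where walk: "hwalk F p g h" and ends: "g 0 = u" "g p = w"
    unfolding hadj_pow_iff_hwalk by blast
  have "geodesic F p g"
    by (rule shortest_hwalk_geodesic[OF walk]) (use not_less_Least ends in \<open>auto simp: p_def\<close>)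
  then have "loose_path V F (map g [0..<Suc p]) (map h [0..<p])"
    using loose_path_of_geodesic hg FE u walk ends(1) by blast
  moreover have "hd (map g [0..<Suc p]) = u" "last (map g [0..<Suc p]) = w"
    using ends by (simp_all del: upt_Suc add: hd_map last_map)
  ultimately show ?thesis
    using \<open>p \<le> n\<close> unfolding loose_path_from_def by fastforce
qed

lemma loose_path_from_imp_hadj_pow:
  assumes "loose_path_from V F u w p"
  shows "(hadj F ^^ p) u w"
proof -
  obtain vs es where path: "loose_path V F vs es" and ends: "hd vs = u" "last vs = w"
    and len: "length es = p"
    using assms unfolding loose_path_from_def by blast
  have len_vs: "length vs = Suc p"
    using path len unfolding loose_path_def by simp
  then have "vs \<noteq> []"
    by auto
  then have "vs ! 0 = u" "vs ! p = w"
    using ends len_vs by (auto simp: hd_conv_nth last_conv_nth)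
  moreover have "hwalk F p ((!) vs) ((!) es)"
    using path len unfolding loose_path_def hwalk_def by (auto simp: subsetD)
  ultimately show ?thesis
    unfolding hadj_pow_iff_hwalk by blast
qed

lemma hdist_le:
  assumes "hypergraph V E" "u \<in> V" "(hadj E ^^ n) u w"
  shows "hdist V E u w \<le> n"
proof -
  obtain p where "p \<le> n" "loose_path_from V E u w p"
    using hadj_pow_imp_loose_path_from[OF assms(1) order_refl assms(2,3)] by blast
  then show ?thesis
    unfolding hdist_def by (meson Least_le le_trans)
qed

lemma hdist_hadj_pow:
  assumes "hconnected V E" "u \<in> V" "w \<in> V"
  shows "(hadj E ^^ hdist V E u w) u w"
proof -
  obtain p where "loose_path_from V E u w p"
    using assms unfolding hconnected_def by blast
  then have "loose_path_from V E u w (hdist V E u w)"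
    unfolding hdist_def by (rule LeastI)
  then show ?thesis
    by (rule loose_path_from_imp_hadj_pow)
qed

lemma hdist_sym:
  assumes "hypergraph V E" "hconnected V E" "u \<in> V" "w \<in> V"
  shows "hdist V E w u = hdist V E u w"
  using hdist_le[OF assms(1) _ hadj_pow_sym[OF hdist_hadj_pow[OF assms(2)]]] assms(3,4)
  by (meson antisym)

lemma hdist_edge_le:
  assumes hg: "hypergraph V E" and conn: "hconnected V E"
    and "e \<in> E" "a \<in> e" "b \<in> e" "w \<in> V"
  shows "hdist V E a w \<le> hdist V E b w + 1"
proof -
  have V: "a \<in> V" "b \<in> V"
    using hg assms unfolding hypergraph_def by auto
  have "(hadj E ^^ 1) a b"
    using assms unfolding hadj_def by auto
  then have "(hadj E ^^ (1 + hdist V E b w)) a w"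
    using hdist_hadj_pow[OF conn V(2) \<open>w \<in> V\<close>] by (rule relpowp_trans)
  then show ?thesis
    using hdist_le[OF hg V(1)] by fastforce
qed

lemma hdist_add_two_imp_distinct:
  assumes hg: "hypergraph V E" and conn: "hconnected V E" and e1: "e1 \<in> E" and e2: "e2 \<in> E"
    and u1: "u1 \<in> e1" and v1: "v1 \<in> e1" and u2: "u2 \<in> e2" and v2: "v2 \<in> e2"
    and dist: "hdist V E u1 u2 = hdist V E v1 v2 + 2"
  shows "u1 \<noteq> v1" and "u2 \<noteq> v2"
proof -
  have V: "u1 \<in> V" "u2 \<in> V" "v2 \<in> V"
    using hg e1 e2 u1 u2 v2 unfolding hypergraph_def by auto
  show "u1 \<noteq> v1"
    using dist hdist_edge_le[OF hg conn e2 u2 v2 V(1)]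
      hdist_sym[OF hg conn V(1) V(2)] hdist_sym[OF hg conn V(1) V(3)] by auto
  show "u2 \<noteq> v2"
    using dist hdist_edge_le[OF hg conn e1 u1 v1 V(2)] by auto
qed

lemma comp_minus_edge_eq:
  assumes "hypergraph V E" "c \<in> V"
  shows "comp_minus_edge V E e c = {w \<in> V. \<exists>n. (hadj (E - {e}) ^^ n) c w}"
proof -
  have "(\<exists>p. loose_path_from V (E - {e}) c w p) \<longleftrightarrow> (\<exists>n. (hadj (E - {e}) ^^ n) c w)" for w
    using hadj_pow_imp_loose_path_from[OF assms(1) Diff_subset assms(2)]
      loose_path_from_imp_hadj_pow by meson
  then show ?thesis
    unfolding comp_minus_edge_def by simp
qed

section \<open>Edges of a hypertree separate their vertices\<close>

lemma loose_cycle_of_geodesic: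
  assumes hg: "hypergraph V E" and e: "e \<in> E" and F: "F \<subseteq> E - {e}"
    and walk: "hwalk F n g h" and geo: "geodesic F n g" and n: "0 < n"
    and ends: "g 0 \<in> e" "g n \<in> e"
    and avoid: "\<And>i. 0 < i \<Longrightarrow> i + 1 < n \<Longrightarrow> h i \<inter> e = {}"
  shows "loose_cycle V E (map g [0..<Suc n]) (map h [0..<n] @ [e])"
proof -
  define vs where "vs = map g [0..<Suc n]"
  define es where "es = map h [0..<n] @ [e]"
  have "g 0 \<in> V"
    using hg e ends unfolding hypergraph_def by blast
  moreover have "F \<subseteq> E"
    using F by blast
  ultimately have path: "loose_path V F vs (map h [0..<n])"
    unfolding vs_def using loose_path_of_geodesic[OF hg _ _ walk geo] by blast
  have len: "length es = Suc n" "length vs = Suc n"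
    unfolding vs_def es_def by simp_all
  have es_nth: "es ! i = (if i < n then h i else e)" if "i < Suc n" for i
    using that unfolding es_def by (auto simp: nth_append)
  have vs_nth: "vs ! i = g i" if "i < Suc n" for i
    using that unfolding vs_def by (simp del: upt_Suc add: nth_map_upt)
  have step: "h i \<in> F" "g i \<in> h i" "g (Suc i) \<in> h i" if "i < n" for i
    using walk that unfolding hwalk_def by auto
  note disjoint = geodesic_hwalk_loose(3)[OF walk geo]
  show ?thesis
    unfolding loose_cycle_def len vs_def[symmetric] es_def[symmetric]
  proof (intro conjI allI impI)
    show "2 \<le> Suc n"
      using n by simp
    show "Suc n = Suc n" ..
    show "set vs \<subseteq> V" "distinct vs"
      using path unfolding loose_path_def by simp_all
    show "set es \<subseteq> E"
      unfolding es_def using step(1) F e by fastforce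
    have "h i \<noteq> e" if "i < n" for i
      using step(1)[OF that] F by blast
    then have "e \<notin> set (map h [0..<n])"
      by fastforce
    then show "distinct es"
      using path unfolding loose_path_def es_def by simp
  next
    fix i assume "i < Suc n"
    then consider "i < n" | "i = n"
      by linarith
    then have "vs ! i \<in> es ! i \<and> vs ! (Suc i mod Suc n) \<in> es ! i"
    proof cases
      case 1
      then show ?thesis
        using step es_nth vs_nth by simp
    next
      case 2
      then show ?thesis
        using ends es_nth vs_nth by simp
    qed
    then show "vs ! i \<in> es ! i" "vs ! (Suc i mod Suc n) \<in> es ! i"
      by simp_all
  next
    fix i j assume ij: "i < Suc n" "j < Suc n"
      "i \<noteq> j \<and> Suc i mod Suc n \<noteq> j \<and> Suc j mod Suc n \<noteq> i"
    consider "i < n" "j < n" | "i < n" "j = n" | "i = n" "j < n" | "i = n" "j = n"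
      using ij(1,2) by linarith
    then show "es ! i \<inter> es ! j = {}"
    proof cases
      case 1
      then have "es ! i = h i" "es ! j = h j"
        using es_nth by simp_all
      moreover have "i + 1 < j \<or> j + 1 < i"
        using ij(3) 1 by auto
      ultimately show ?thesis
        using 1 disjoint[of i j] disjoint[of j i] by blast
    next
      case 2
      then show ?thesis
        using ij(3) avoid[of i] es_nth by auto
    next
      case 3
      then show ?thesis
        using ij(3) avoid[of j] es_nth by auto
    qed (use ij in simp)
  qed
qed

lemma hypertree_edge_separates:
  assumes tree: "hypertree V E" and e: "e \<in> E" and "a \<in> e" "c \<in> e" "a \<noteq> c"
  shows "\<not> (hadj (E - {e}) ^^ n) a c"
proof
  assume "(hadj (E - {e}) ^^ n) a c"
  \<comment> \<open>Take a shortest walk outside \<open>e\<close> joining two vertices of \<open>e\<close>, minimal over all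
    such pairs: this keeps its inner edges disjoint from \<open>e\<close>, so it closes to a loose cycle.\<close>
  define crossing where
    "crossing m \<longleftrightarrow> (\<exists>a\<in>e. \<exists>c\<in>e. a \<noteq> c \<and> (hadj (E - {e}) ^^ m) a c)" for m
  define n0 where "n0 = (LEAST m. crossing m)"
  have "crossing n"
    unfolding crossing_def using assms \<open>(hadj (E - {e}) ^^ n) a c\<close> by blast
  then have "crossing n0"
    unfolding n0_def by (rule LeastI)
  then obtain a0 c0 where ac0: "a0 \<in> e" "c0 \<in> e" "a0 \<noteq> c0" "(hadj (E - {e}) ^^ n0) a0 c0"
    unfolding crossing_def by blast
  have shorter: "\<not> crossing m" if "m < n0" for m
    using that unfolding n0_def by (rule not_less_Least)
  obtain g h where walk: "hwalk (E - {e}) n0 g h" and ends: "g 0 = a0" "g n0 = c0"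
    using ac0(4) unfolding hadj_pow_iff_hwalk by blast
  have "0 < n0"
    using ends ac0(3) by (cases n0) auto
  have geo: "geodesic (E - {e}) n0 g"
    by (rule shortest_hwalk_geodesic[OF walk]) (use shorter ac0 ends in \<open>auto simp: crossing_def\<close>)
  have avoid: "h i \<inter> e = {}" if i: "0 < i" "i + 1 < n0" for i
  proof (rule ccontr)
    assume "h i \<inter> e \<noteq> {}"
    then obtain y where y: "y \<in> h i" "y \<in> e"
      by blast
    have step: "h i \<in> E - {e}" "g i \<in> h i" "g (Suc i) \<in> h i"
      using walk i unfolding hwalk_def by auto
    show False
    proof (cases "y = a0")
      case True
      have "(hadj (E - {e}) ^^ 1) a0 (g (Suc i))"
        using step y True unfolding relpowp_1 hadj_def by blast
      moreover have "(hadj (E - {e}) ^^ (n0 - Suc i)) (g (Suc i)) (g n0)"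
        by (rule hwalk_segment[OF walk]) (use i in linarith)+
      ultimately have "(hadj (E - {e}) ^^ (1 + (n0 - Suc i))) a0 c0"
        unfolding ends(2) by (rule relpowp_trans)
      then have "crossing (1 + (n0 - Suc i))"
        unfolding crossing_def using ac0 by blast
      moreover have "1 + (n0 - Suc i) < n0"
        using i by linarith
      ultimately show False
        using shorter by blast
    next
      case False
      have "(hadj (E - {e}) ^^ (i - 0)) (g 0) (g i)"
        by (rule hwalk_segment[OF walk]) (use i in linarith)+
      moreover have "hadj (E - {e}) (g i) y"
        using step y unfolding hadj_def by blast
      ultimately have "(hadj (E - {e}) ^^ Suc (i - 0)) a0 y"
        unfolding ends(1) by (rule relpowp_Suc_I)
      moreover have "a0 \<noteq> y"
        using False by simp
      ultimately have "crossing (Suc (i - 0))"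
        unfolding crossing_def using ac0(1) y(2) by blast
      moreover have "Suc (i - 0) < n0"
        using i by linarith
      ultimately show False
        using shorter by blast
    qed
  qed
  have hg: "hypergraph V E"
    using tree unfolding hypertree_def by blast
  have "g 0 \<in> e" "g n0 \<in> e"
    using ends ac0 by simp_all
  then have "loose_cycle V E (map g [0..<Suc n0]) (map h [0..<n0] @ [e])"
    using loose_cycle_of_geodesic[OF hg e order_refl walk geo \<open>0 < n0\<close>] avoid by blast
  then show False
    using tree unfolding hypertree_def by blast
qed

lemma hadj_pow_remove_edge:
  assumes "(hadj E ^^ n) a w"
  shows "(hadj (E - {e}) ^^ n) a w \<or> (\<exists>c\<in>e. \<exists>m<n. (hadj (E - {e}) ^^ m) c w)"
  using assms
proof (induction n arbitrary: a)
  case (Suc n)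
  obtain y where "hadj E a y" and rest: "(hadj E ^^ n) y w"
    using relpowp_Suc_D2[OF Suc.prems] by blast
  then obtain f where f: "f \<in> E" "a \<in> f" "y \<in> f"
    unfolding hadj_def by blast
  from Suc.IH[OF rest] show ?case
  proof
    assume rest': "(hadj (E - {e}) ^^ n) y w"
    show ?case
    proof (cases "f = e")
      case True
      then show ?thesis
        using rest' f by blast
    next
      case False
      then have "hadj (E - {e}) a y"
        using f unfolding hadj_def by blast
      then have "(hadj (E - {e}) ^^ Suc n) a w"
        using rest' by (rule relpowp_Suc_I2)
      then show ?thesis ..
    qed
  next
    assume "\<exists>c\<in>e. \<exists>m<n. (hadj (E - {e}) ^^ m) c w"
    then show ?case
      using less_SucI by blast
  qed
qed simp

lemma comp_minus_edge_cover:
  assumes hg: "hypergraph V E" and conn: "hconnected V E" and e: "e \<in> E" and w: "w \<in> V"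
  obtains c where "c \<in> e" "w \<in> comp_minus_edge V E e c"
proof -
  have "e \<subseteq> V" "2 \<le> card e"
    using hg e unfolding hypergraph_def by auto
  then have "e \<noteq> {}"
    by auto
  then obtain a where a: "a \<in> e" "a \<in> V"
    using \<open>e \<subseteq> V\<close> by blast
  from hadj_pow_remove_edge[OF hdist_hadj_pow[OF conn a(2) w], of e]
  obtain c m where "c \<in> e" "(hadj (E - {e}) ^^ m) c w"
    using a(1) by blast
  moreover have "c \<in> V"
    using \<open>e \<subseteq> V\<close> \<open>c \<in> e\<close> by blast
  ultimately have "w \<in> comp_minus_edge V E e c"
    unfolding comp_minus_edge_eq[OF hg \<open>c \<in> V\<close>] using w by blast
  then show thesis
    using that \<open>c \<in> e\<close> by blast
qed

lemma comp_minus_edge_disjoint: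
  assumes tree: "hypertree V E" and e: "e \<in> E" and a: "a \<in> e" and b: "b \<in> e" and "a \<noteq> b"
  shows "comp_minus_edge V E e a \<inter> comp_minus_edge V E e b = {}"
proof (rule ccontr)
  assume "comp_minus_edge V E e a \<inter> comp_minus_edge V E e b \<noteq> {}"
  then obtain w where "w \<in> comp_minus_edge V E e a" "w \<in> comp_minus_edge V E e b"
    by blast
  moreover have hg: "hypergraph V E" and "a \<in> V" "b \<in> V"
    using tree e a b unfolding hypertree_def hypergraph_def by auto
  ultimately obtain m m' where aw: "(hadj (E - {e}) ^^ m) a w" and bw: "(hadj (E - {e}) ^^ m') b w"
    unfolding comp_minus_edge_eq[OF hg \<open>a \<in> V\<close>] comp_minus_edge_eq[OF hg \<open>b \<in> V\<close>] by blast
  have "(hadj (E - {e}) ^^ (m + m')) a b"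
    using aw hadj_pow_sym[OF bw] by (rule relpowp_trans)
  then show False
    using hypertree_edge_separates[OF assms] by blast
qed

section \<open>Distances across an edge\<close>

lemma hdist_across_edge:
  assumes tree: "hypertree V E" and e: "e \<in> E" and a: "a \<in> e" and c: "c \<in> e" and "a \<noteq> c"
    and w: "w \<in> comp_minus_edge V E e c"
  shows "hdist V E a w = hdist V E c w + 1"
proof -
  have hg: "hypergraph V E" and conn: "hconnected V E"
    using tree unfolding hypertree_def by auto
  have V: "a \<in> V" "c \<in> V"
    using hg e a c unfolding hypergraph_def by auto
  obtain m where wV: "w \<in> V" and cw: "(hadj (E - {e}) ^^ m) c w"
    using w comp_minus_edge_eq[OF hg V(2)] by blast
  note separated = hypertree_edge_separates[OF tree e]
  from hadj_pow_remove_edge[OF hdist_hadj_pow[OF conn V(1) wV], of e]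
  have "hdist V E c w + 1 \<le> hdist V E a w"
  proof
    assume "(hadj (E - {e}) ^^ hdist V E a w) a w"
    then have "(hadj (E - {e}) ^^ (hdist V E a w + m)) a c"
      using hadj_pow_sym[OF cw] by (rule relpowp_trans)
    then show ?thesis
      using separated[OF a c \<open>a \<noteq> c\<close>] by blast
  next
    assume "\<exists>c'\<in>e. \<exists>m'<hdist V E a w. (hadj (E - {e}) ^^ m') c' w"
    then obtain c' m' where c': "c' \<in> e" "m' < hdist V E a w" "(hadj (E - {e}) ^^ m') c' w"
      by blast
    have "c' = c"
    proof (rule ccontr)
      assume "c' \<noteq> c"
      have "(hadj (E - {e}) ^^ (m' + m)) c' c"
        using c'(3) hadj_pow_sym[OF cw] by (rule relpowp_trans)
      then show False
        using separated[OF c'(1) c \<open>c' \<noteq> c\<close>] by blast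
    qed
    then have "(hadj E ^^ m') c w"
      using hadj_pow_mono[OF Diff_subset c'(3)] by simp
    then have "hdist V E c w \<le> m'"
      by (rule hdist_le[OF hg V(2)])
    then show ?thesis
      using c'(2) by linarith
  qed
  then show ?thesis
    using hdist_edge_le[OF hg conn e a c wV] by linarith
qed

lemma equidistant_edge_vertices:
  assumes tree: "hypertree V E" and e: "e \<in> E" and a: "a \<in> e" and b: "b \<in> e" and ab: "a \<noteq> b"
  shows "{w \<in> V. hdist V E w a = hdist V E w b}
    = V - comp_minus_edge V E e a - comp_minus_edge V E e b"
proof -
  have hg: "hypergraph V E" and conn: "hconnected V E"
    using tree unfolding hypertree_def by auto
  have V: "a \<in> V" "b \<in> V"
    using hg e a b unfolding hypergraph_def by auto
  have "hdist V E w a = hdist V E w b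
    \<longleftrightarrow> w \<notin> comp_minus_edge V E e a \<and> w \<notin> comp_minus_edge V E e b" if w: "w \<in> V" for w
  proof -
    have sym: "hdist V E w a = hdist V E a w" "hdist V E w b = hdist V E b w"
      using hdist_sym[OF hg conn V(1) w] hdist_sym[OF hg conn V(2) w] by simp_all
    consider "w \<in> comp_minus_edge V E e a" | "w \<in> comp_minus_edge V E e b"
      | "w \<notin> comp_minus_edge V E e a" "w \<notin> comp_minus_edge V E e b"
      by blast
    then show ?thesis
    proof cases
      case 1
      then show ?thesis
        using sym hdist_across_edge[OF tree e b a ab[symmetric]] by simp
    next
      case 2
      then show ?thesis
        using sym hdist_across_edge[OF tree e a b ab] by simp
    next
      case 3
      obtain c where c: "c \<in> e" "w \<in> comp_minus_edge V E e c"
        using comp_minus_edge_cover[OF hg conn e w] by blast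
      then have "c \<noteq> a" "c \<noteq> b"
        using 3 by auto
      then show ?thesis
        using 3 c sym hdist_across_edge[OF tree e a c(1)] hdist_across_edge[OF tree e b c(1)] by simp
    qed
  qed
  then show ?thesis
    by blast
qed

section \<open>Distance eigenvectors\<close>

lemma dist_eigenpair_edge_diff:
  assumes tree: "hypertree V E" and eig: "dist_eigenpair V E r x"
    and e: "e \<in> E" and a: "a \<in> e" and b: "b \<in> e" and ab: "a \<noteq> b"
  shows "r * (x a - x b) = sigma x (comp_minus_edge V E e b) - sigma x (comp_minus_edge V E e a)"
proof -
  define Ca where "Ca = comp_minus_edge V E e a"
  define Cb where "Cb = comp_minus_edge V E e b"
  have hg: "hypergraph V E"
    using tree unfolding hypertree_def by blast
  then have fin: "finite V" and V: "a \<in> V" "b \<in> V"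
    using e a b unfolding hypergraph_def by auto
  have CV: "Ca \<subseteq> V" "Cb \<subseteq> V"
    unfolding Ca_def Cb_def comp_minus_edge_def by auto
  have disj: "Ca \<inter> Cb = {}"
    unfolding Ca_def Cb_def by (rule comp_minus_edge_disjoint[OF tree e a b ab])
  have coeff: "real (hdist V E a v) - real (hdist V E b v) = of_bool (v \<in> Cb) - of_bool (v \<in> Ca)"
    if v: "v \<in> V" for v
  proof -
    consider "v \<in> Ca" | "v \<in> Cb" | "v \<in> V - Ca - Cb"
      using v by blast
    then show ?thesis
    proof cases
      case 1
      then show ?thesis
        using disj hdist_across_edge[OF tree e b a ab[symmetric]] unfolding Ca_def by auto
    next
      case 2
      then show ?thesis
        using disj hdist_across_edge[OF tree e a b ab] unfolding Cb_def by auto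
    next
      case 3
      then have "hdist V E v a = hdist V E v b"
        using equidistant_edge_vertices[OF tree e a b ab] unfolding Ca_def Cb_def by blast
      then show ?thesis
        using 3 hdist_sym[OF hg _ V(1) v] hdist_sym[OF hg _ V(2) v] tree
        unfolding hypertree_def by auto
    qed
  qed
  have "r * (x a - x b) = (\<Sum>v\<in>V. (real (hdist V E a v) - real (hdist V E b v)) * x v)"
    using eig V unfolding dist_eigenpair_def
    by (simp add: right_diff_distrib left_diff_distrib sum_subtractf)
  also have "\<dots> = (\<Sum>v\<in>V. of_bool (v \<in> Cb) * x v) - (\<Sum>v\<in>V. of_bool (v \<in> Ca) * x v)"
    by (simp add: coeff left_diff_distrib sum_subtractf)
  also have "\<dots> = sigma x Cb - sigma x Ca"
    using CV fin by (simp add: sigma_def Int_absorb1)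
  finally show ?thesis
    unfolding Ca_def Cb_def .
qed

lemma sigma_edge_partition:
  assumes tree: "hypertree V E" and e: "e \<in> E" and a: "a \<in> e" and b: "b \<in> e" and ab: "a \<noteq> b"
  shows "sigma x V = sigma x (comp_minus_edge V E e a) + sigma x (comp_minus_edge V E e b)
    + sigma x {w \<in> V. hdist V E w a = hdist V E w b}"
proof -
  define Ca where "Ca = comp_minus_edge V E e a"
  define Cb where "Cb = comp_minus_edge V E e b"
  have fin: "finite V"
    using tree unfolding hypertree_def hypergraph_def by blast
  have CV: "Ca \<union> Cb \<subseteq> V"
    unfolding Ca_def Cb_def comp_minus_edge_def by auto
  then have "finite Ca" "finite Cb"
    using fin finite_subset by blast+
  moreover have "Ca \<inter> Cb = {}"
    unfolding Ca_def Cb_def by (rule comp_minus_edge_disjoint[OF tree e a b ab])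
  ultimately have "sigma x (Ca \<union> Cb) = sigma x Ca + sigma x Cb"
    unfolding sigma_def by (rule sum.union_disjoint)
  moreover have "sigma x V = sigma x (V - (Ca \<union> Cb)) + sigma x (Ca \<union> Cb)"
    unfolding sigma_def using sum.subset_diff[OF CV fin] .
  moreover have "V - (Ca \<union> Cb) = {w \<in> V. hdist V E w a = hdist V E w b}"
    unfolding equidistant_edge_vertices[OF tree e a b ab] Ca_def Cb_def by blast
  then have "sigma x (V - (Ca \<union> Cb)) = sigma x {w \<in> V. hdist V E w a = hdist V E w b}"
    by simp
  ultimately show ?thesis
    unfolding Ca_def Cb_def by linarith
qed

lemma dist_eigenpair_edge_identity:
  assumes tree: "hypertree V E" and eig: "dist_eigenpair V E r x"
    and e: "e \<in> E" and a: "a \<in> e" and b: "b \<in> e" and ab: "a \<noteq> b"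
  shows "r * (x a - x b) = sigma x V - 2 * sigma x (comp_minus_edge V E e a)
    - sigma x {w \<in> V. hdist V E w a = hdist V E w b}"
  using dist_eigenpair_edge_diff[OF assms] sigma_edge_partition[OF tree e a b ab, of x]
  by linarith

lemma comp_minus_edge_pendant:
  assumes hg: "hypergraph V E" and e: "e \<in> E" and w: "w \<in> e" and deg: "hdeg E w = 1"
  shows "comp_minus_edge V E e w = {w}"
proof -
  have "card {f \<in> E. w \<in> f} = Suc 0"
    using deg unfolding hdeg_def by simp
  then obtain f where Ew: "{f \<in> E. w \<in> f} = {f}"
    unfolding card_1_singleton_iff by blast
  have only_e: "f' = e" if "f' \<in> E" "w \<in> f'" for f'
  proof -
    have "e \<in> {f}" "f' \<in> {f}"
      unfolding Ew[symmetric] using e w that by simp_all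
    then show ?thesis
      by simp
  qed
  then have stuck: "\<not> hadj (E - {e}) w y" for y
    unfolding hadj_def by blast
  have stay: "y = w" if reach: "(hadj (E - {e}) ^^ m) w y" for m y
  proof (cases m)
    case 0
    then show ?thesis
      using reach by simp
  next
    case (Suc k)
    then obtain y' where "hadj (E - {e}) w y'"
      using relpowp_Suc_D2[OF reach[unfolded Suc]] by blast
    then show ?thesis
      using stuck by blast
  qed
  have "w \<in> V"
    using hg e w unfolding hypergraph_def by blast
  moreover have "(hadj (E - {e}) ^^ 0) w w"
    by simp
  ultimately show ?thesis
    unfolding comp_minus_edge_eq[OF hg \<open>w \<in> V\<close>] using stay by blast
qed

lemma dist_eigenpair_pendant:
  assumes tree: "hypertree V E" and eig: "dist_eigenpair V E r x"
    and e: "e \<in> E" and u: "u \<in> e" and w: "w \<in> e" and uw: "u \<noteq> w" and deg: "hdeg E w = 1"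
  shows "r * (x u - x w) = x w - sigma x (comp_minus_edge V E e u)"
proof -
  have "hypergraph V E"
    using tree unfolding hypertree_def by blast
  then have "sigma x (comp_minus_edge V E e w) = x w"
    using comp_minus_edge_pendant[OF _ e w deg] by (simp add: sigma_def)
  then show ?thesis
    using dist_eigenpair_edge_diff[OF tree eig e u w uw] by simp
qed

lemma equidistant_edge_vertices_pendant:
  assumes tree: "hypertree V E" and e: "e \<in> E" and u: "u \<in> e" and v: "v \<in> e" and uv: "u \<noteq> v"
    and ew: "e - {u, v} = {w}" and deg: "hdeg E w = 1"
  shows "{y \<in> V. hdist V E y u = hdist V E y v} = {w}"
proof -
  have hg: "hypergraph V E" and conn: "hconnected V E"
    using tree unfolding hypertree_def by auto
  have w: "w \<in> e" "w \<noteq> u" "w \<noteq> v"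
    using ew by auto
  have "w \<in> V"
    using hg e w unfolding hypergraph_def by blast
  have Cw: "comp_minus_edge V E e w = {w}"
    by (rule comp_minus_edge_pendant[OF hg e w(1) deg])
  have "V - comp_minus_edge V E e u - comp_minus_edge V E e v = {w}"
  proof
    show "V - comp_minus_edge V E e u - comp_minus_edge V E e v \<subseteq> {w}"
    proof
      fix y assume y: "y \<in> V - comp_minus_edge V E e u - comp_minus_edge V E e v"
      then obtain c where "c \<in> e" "y \<in> comp_minus_edge V E e c"
        using comp_minus_edge_cover[OF hg conn e] by blast
      moreover have "c = u \<or> c = v \<or> c = w"
        using ew \<open>c \<in> e\<close> by blast
      ultimately show "y \<in> {w}"
        using y Cw by auto
    qed
    have "w \<notin> comp_minus_edge V E e u" "w \<notin> comp_minus_edge V E e v"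
      using comp_minus_edge_disjoint[OF tree e w(1) u w(2)]
        comp_minus_edge_disjoint[OF tree e w(1) v w(3)] Cw by auto
    then show "{w} \<subseteq> V - comp_minus_edge V E e u - comp_minus_edge V E e v"
      using \<open>w \<in> V\<close> by blast
  qed
  then show ?thesis
    using equidistant_edge_vertices[OF tree e u v uv] by simp
qed

theorem lemma2p1:
  fixes V :: "'a set" and E :: "'a set set" and x :: "'a \<Rightarrow> real"
    and e1 e2 :: "'a set" and u1 u2 v1 v2 w1 w2 :: 'a
  assumes tree: "hypertree V E"
    and perron: "dist_perron_vector V E x"
    and e1: "e1 \<in> E" and e2: "e2 \<in> E"
    and u1: "u1 \<in> e1" and v1: "v1 \<in> e1" and u2: "u2 \<in> e2" and v2: "v2 \<in> e2"
    and dist: "hdist V E u1 u2 = hdist V E v1 v2 + 2"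
  defines "\<rho> \<equiv> dist_spectral_radius V E"
    and "T1 \<equiv> comp_minus_edge V E e1 u1"
    and "T2 \<equiv> comp_minus_edge V E e2 u2"
    and "A1 \<equiv> {w\<in>V. hdist V E w u1 = hdist V E w v1}"
    and "A2 \<equiv> {w\<in>V. hdist V E w u2 = hdist V E w v2}"
  shows "(\<rho> * (x u1 - x u2) - \<rho> * (x v1 - x v2)
           = 2 * (sigma x T2 - sigma x T1) + sigma x A2 - sigma x A1)
    \<and> (e1 - {u1, v1} = {w1} \<and> hdeg E w1 = 1 \<and>
         e2 - {u2, v2} = {w2} \<and> hdeg E w2 = 1 \<longrightarrow>
           (\<rho> + 1) * (x w1 - x w2) - \<rho> * (x v1 - x v2)
             = x w2 - x w1 + sigma x T2 - sigma x T1
           \<and> \<rho> * (x u1 - x u2) - (\<rho> + 1) * (x w1 - x w2)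
             = sigma x T2 - sigma x T1)"
proof -
  have hg: "hypergraph V E" and conn: "hconnected V E"
    using tree unfolding hypertree_def by auto
  have eig: "dist_eigenpair V E \<rho> x"
    using perron unfolding dist_perron_vector_def \<rho>_def by blast
  \<comment> \<open>The distance hypothesis is only needed to rule out \<open>u\<^sub>i = v\<^sub>i\<close>.\<close>
  note uv1 = hdist_add_two_imp_distinct(1)[OF hg conn e1 e2 u1 v1 u2 v2 dist]
  note uv2 = hdist_add_two_imp_distinct(2)[OF hg conn e1 e2 u1 v1 u2 v2 dist]
  have part1: "\<rho> * (x u1 - x u2) - \<rho> * (x v1 - x v2)
      = 2 * (sigma x T2 - sigma x T1) + sigma x A2 - sigma x A1"
    using dist_eigenpair_edge_identity[OF tree eig e1 u1 v1 uv1]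
      dist_eigenpair_edge_identity[OF tree eig e2 u2 v2 uv2]
    unfolding T1_def T2_def A1_def A2_def by (simp add: algebra_simps)
  have part2: "(\<rho> + 1) * (x w1 - x w2) - \<rho> * (x v1 - x v2)
        = x w2 - x w1 + sigma x T2 - sigma x T1
      \<and> \<rho> * (x u1 - x u2) - (\<rho> + 1) * (x w1 - x w2) = sigma x T2 - sigma x T1"
    if pendant: "e1 - {u1, v1} = {w1}" "hdeg E w1 = 1" "e2 - {u2, v2} = {w2}" "hdeg E w2 = 1"
  proof -
    have w: "w1 \<in> e1" "u1 \<noteq> w1" "w2 \<in> e2" "u2 \<noteq> w2"
      using pendant by auto
    have "sigma x A1 = x w1" "sigma x A2 = x w2"
      unfolding A1_def A2_def
      using equidistant_edge_vertices_pendant[OF tree e1 u1 v1 uv1 pendant(1,2)]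
        equidistant_edge_vertices_pendant[OF tree e2 u2 v2 uv2 pendant(3,4)]
      by (simp_all add: sigma_def)
    then show ?thesis
      using part1 dist_eigenpair_pendant[OF tree eig e1 u1 w(1,2) pendant(2)]
        dist_eigenpair_pendant[OF tree eig e2 u2 w(3,4) pendant(4)]
      unfolding T1_def T2_def by (simp add: algebra_simps)
  qed
  show ?thesis
    using part1 part2 by blast
qed

end
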